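(* Let $n\ge3$, $\gamma<1$ real, and $z_1,\dots,z_n\in\mathbb{C}$ not all zero with $\frac{\gamma}{n}\big(\sum_\ell z_\ell\big)^2=\sum_\ell z_\ell^2$. Then for each $N$ with $3\le N\le n$ there exists a full lift of $(z_1,\dots,z_n;\gamma)$ in $\mathbb{R}^N$. Moreover, for $N=3$: suppose $$n\sum_\ell|z_\ell|^2+(\gamma-2)\Big|\sum_\ell z_\ell\Big|^2\neq0 .$$ Put $\rho=\frac12\sum_\ell|z_\ell|^2-\frac{\gamma}{2n}\big|\sum_\ell z_\ell\big|^2$, $\sigma=\gamma\rho/(1-\gamma)$, $u_1=\sum_\ell\alpha_\ell/\sqrt{n(\sigma+\rho)}$, $u_2=\sum_\ell\beta_\ell/\sqrt{n(\sigma+\rho)}$, $u_3=\sqrt{1-u_1^2-u_2^2}$, let $A$ be the $3\times n$ real matrix with rows $(\alpha_1,\dots,\alpha_n)$, $(\beta_1,\dots,\beta_n)$, $(1,\dots,1)$, and $\vec b=u_3\,(\sigma u_1,\ \sigma u_2,\ \sqrt{n(\sigma+\rho)})^t$. Then $u_3>0$, $A$ has rank $3$, and the lifts in $\mathbb{R}^3$ are exactly the matrices $W$ with rows $(\alpha_\ell)$, $(\beta_\ell)$, $\vec t^{\,t}$ where $\vec t=\pm A^t(AA^t)^{-1}\vec b$, i.e. $\vec t$ is the minimal Euclidean norm solution of $A\vec t=\pm\vec b$; in particular the lift in $\mathbb{R}^3$ is unique up to the sign $\vec t\mapsto-\vec t$.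
   Context: Write $z_\ell=\alpha_\ell+i\beta_\ell$ with $\alpha_\ell,\beta_\ell$ real. For $N\ge3$, a lift of $(z_1,\dots,z_n;\gamma)$ in $\mathbb{R}^N$ is a real $N\times n$ matrix $W=(\vec x_1|\cdots|\vec x_n)$ whose first row is $(\alpha_1,\dots,\alpha_n)$ and second row is $(\beta_1,\dots,\beta_n)$ (so $z_\ell$ is the orthogonal projection $y\mapsto y_1+iy_2$ of $\vec x_\ell$), such that for some unit vector $\vec u\in\mathbb{R}^N$ and reals $\rho>0$, $\sigma$ with $\rho+\sigma>0$ and $\gamma=\sigma/(\sigma+\rho)$: $WW^t=\rho I_N+\sigma\vec u\vec u^{\,t}$ and $\sum_\ell\vec x_\ell=\sqrt{n(\sigma+\rho)}\,\vec u$. (Equivalently, $W$ is the matrix of a configured star in $\mathbb{R}^N$ with internal vertex $0$ whose external vertices project to the $z_\ell$, with invariant $\sigma/(\sigma+\rho)=\gamma$.) The lift is full if the external vertices do not lie in a proper linear subspace, i.e. $W$ has rank $N$. *)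

theory Defs
  imports Complex_Main "Jordan_Normal_Form.DL_Rank" "Jordan_Normal_Form.Gauss_Jordan_Elimination"
begin

text \<open>Indices are 0-based: the points are z 0, ..., z (n-1); a real N x n matrix W has
  columns x_l (l < n) = the external vertices. Row 0 is the real parts, row 1 the
  imaginary parts.\<close>

definition is_lift :: "nat \<Rightarrow> (nat \<Rightarrow> complex) \<Rightarrow> real \<Rightarrow> nat \<Rightarrow> real mat \<Rightarrow> bool" where
  "is_lift n z \<gamma> N W \<longleftrightarrow>
     W \<in> carrier_mat N n \<and>
     (\<forall>l<n. W $$ (0, l) = Re (z l) \<and> W $$ (1, l) = Im (z l)) \<and>
     (\<exists>(u :: real vec) (\<rho> :: real) (\<sigma> :: real).
        u \<in> carrier_vec N \<and> u \<bullet> u = 1 \<and> \<rho> > 0 \<and> \<rho> + \<sigma> > 0 \<and>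
        \<gamma> = \<sigma> / (\<sigma> + \<rho>) \<and>
        W * W\<^sup>T = \<rho> \<cdot>\<^sub>m 1\<^sub>m N + \<sigma> \<cdot>\<^sub>m mat N N (\<lambda>(i, j). u $ i * u $ j) \<and>
        vec N (\<lambda>i. \<Sum>l<n. W $$ (i, l)) = sqrt (real n * (\<sigma> + \<rho>)) \<cdot>\<^sub>v u)"

definition is_full_lift :: "nat \<Rightarrow> (nat \<Rightarrow> complex) \<Rightarrow> real \<Rightarrow> nat \<Rightarrow> real mat \<Rightarrow> bool" where
  "is_full_lift n z \<gamma> N W \<longleftrightarrow> is_lift n z \<gamma> N W \<and> vec_space.rank N W = N"

end

theory Submission
  imports Defs
begin

text \<open>
  Write \<open>\<alpha>\<close>, \<open>\<beta>\<close> for the real and imaginary parts of the \<open>z\<^sub>l\<close> and \<open>1\<close> for the all-ones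
  vector of \<open>\<real>\<^sup>n\<close>. A matrix is a lift iff its rows \<open>R\<^sub>i\<close> satisfy
  \<open>\<langle>R\<^sub>i, R\<^sub>j\<rangle> = \<rho> \<delta>\<^sub>i\<^sub>j + \<sigma> u\<^sub>i u\<^sub>j\<close> and \<open>\<langle>R\<^sub>i, 1\<rangle> = c u\<^sub>i\<close> with \<open>c = \<surd>(n(\<sigma> + \<rho>))\<close>.
  The relation between \<open>z\<close> and \<open>\<gamma>\<close> says exactly that \<open>\<alpha>\<close>, \<open>\<beta>\<close> satisfy these conditions with
  the given \<open>\<rho>\<close>, \<open>\<sigma>\<close>, \<open>u\<^sub>1\<close>, \<open>u\<^sub>2\<close>, and Cauchy-Schwarz gives \<open>\<rho> > 0\<close>. Positivity of the Gram
  matrix of \<open>\<alpha>\<close>, \<open>\<beta>\<close>, \<open>1\<close> forces \<open>u\<^sub>1\<^sup>2 + u\<^sub>2\<^sup>2 \<le> 1\<close>, with equality exactly in the degenerate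
  case excluded in the second part. Lifts in \<open>\<real>\<^sup>N\<close> are built by appending rows: the vector \<open>t\<close>
  (only when \<open>u\<^sub>1\<^sup>2 + u\<^sub>2\<^sup>2 < 1\<close>; otherwise \<open>1\<close> already lies in the span of \<open>\<alpha>\<close>, \<open>\<beta>\<close>), then
  \<open>\<surd>\<rho>\<close> times an orthonormal family orthogonal to everything before. Every lift is full
  because \<open>W W\<^sup>T = \<rho> I + \<sigma> u u\<^sup>T\<close> is invertible. In \<open>\<real>\<^sup>3\<close> the data \<open>\<rho>\<close>, \<open>\<sigma>\<close>, \<open>u\<close> of a lift are
  forced up to the sign of \<open>u\<^sub>3\<close>, so its third row has the same inner products with \<open>\<alpha>\<close>, \<open>\<beta>\<close>,
  \<open>1\<close> and itself as \<open>\<plusminus>t\<close> and hence equals \<open>\<plusminus>t\<close>.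
\<close>

definition dot :: "nat \<Rightarrow> (nat \<Rightarrow> real) \<Rightarrow> (nat \<Rightarrow> real) \<Rightarrow> real" where
  "dot n f g = (\<Sum>l<n. f l * g l)"

lemma dot_commute: "dot n f g = dot n g f"
  unfolding dot_def by (simp add: mult.commute)

lemma dot_cong:
  "(\<And>l. l < n \<Longrightarrow> f l = f' l) \<Longrightarrow> (\<And>l. l < n \<Longrightarrow> g l = g' l) \<Longrightarrow> dot n f g = dot n f' g'"
  unfolding dot_def by (intro sum.cong) auto

lemma dot_lincomb2_left:
  "dot n (\<lambda>l. a * f l + b * g l) h = a * dot n f h + b * dot n g h"
  unfolding dot_def by (simp add: algebra_simps sum.distrib sum_distrib_left)

lemma dot_affine_left:
  "dot n (\<lambda>l. a * f l + b * g l + d) h = a * dot n f h + b * dot n g h + d * dot n (\<lambda>_. 1) h"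
  unfolding dot_def by (simp add: algebra_simps sum.distrib sum_distrib_left)

lemma dot_affine_self:
  "dot n (\<lambda>l. a * f l + b * g l + d) (\<lambda>l. a * f l + b * g l + d) =
     a * a * dot n f f + b * b * dot n g g + d * d * real n
     + 2 * a * b * dot n f g + 2 * a * d * dot n f (\<lambda>_. 1) + 2 * b * d * dot n g (\<lambda>_. 1)"
  unfolding dot_def by (simp add: algebra_simps sum.distrib sum_distrib_left)

lemma dot_scale_left: "dot n (\<lambda>l. a * f l) g = a * dot n f g"
  unfolding dot_def by (simp add: sum_distrib_left mult.assoc)

lemma dot_scale_right: "dot n f (\<lambda>l. a * g l) = a * dot n f g"
  unfolding dot_def by (simp add: sum_distrib_left mult.left_commute)

lemma dot_divide_left: "dot n (\<lambda>l. f l / a) g = dot n f g / a"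
  unfolding dot_def by (simp add: sum_divide_distrib)

lemma dot_divide_right: "dot n f (\<lambda>l. g l / a) = dot n f g / a"
  unfolding dot_def by (simp add: sum_divide_distrib)

lemma dot_ones_right: "dot n f (\<lambda>_. 1) = (\<Sum>l<n. f l)"
  unfolding dot_def by simp

lemma dot_ones_ones: "dot n (\<lambda>_. 1) (\<lambda>_. 1) = real n"
  unfolding dot_def by simp

lemma dot_self_nonneg: "dot n f f \<ge> 0"
  unfolding dot_def by (intro sum_nonneg) simp

lemma dot_self_eq_0D: "dot n f f = 0 \<Longrightarrow> l < n \<Longrightarrow> f l = 0"
  unfolding dot_def using sum_nonneg_eq_0_iff[of "{..<n}" "\<lambda>l. f l * f l"] by auto

lemma square_sum_le_dot_self: "(\<Sum>l<n. f l)\<^sup>2 \<le> real n * dot n f f"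
proof (cases "n = 0")
  case False
  define m where "m = (\<Sum>l<n. f l) / real n"
  have "0 \<le> (\<Sum>l<n. (f l - m)\<^sup>2)" by (intro sum_nonneg) simp
  also have "\<dots> = dot n f f - 2 * m * (\<Sum>l<n. f l) + real n * m\<^sup>2"
    unfolding dot_def
    by (simp add: power2_eq_square algebra_simps sum.distrib sum_subtractf sum_distrib_left)
  also have "\<dots> = dot n f f - (\<Sum>l<n. f l)\<^sup>2 / real n"
    using False unfolding m_def by (simp add: field_simps power2_eq_square)
  finally show ?thesis using False by (simp add: field_simps)
qed simp

lemma eq_sign_times_if_dot_eq:
  assumes "dot n r r = dot n t t" and "dot n r t = s * dot n t t" and "s * s = 1" and "l < n"
  shows "r l = s * t l"
proof -
  have "dot n (\<lambda>l. s * r l - t l) (\<lambda>l. s * r l - t l) =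
      s * s * dot n r r - 2 * s * dot n r t + dot n t t"
    unfolding dot_def
    by (simp add: algebra_simps sum.distrib sum_subtractf sum_distrib_left)
  also have "\<dots> = 0" using assms(1-3) by (simp add: algebra_simps)
  finally have "s * r l - t l = 0" using dot_self_eq_0D assms(4) by blast
  then show ?thesis using assms(3) by (metis eq_iff_diff_eq_0 mult.assoc mult_1)
qed

lemma exists_nonzero_orthogonal:
  assumes "length L < n"
  shows "\<exists>x. (\<exists>l<n. x l \<noteq> 0) \<and> (\<forall>v\<in>set L. dot n v x = 0)"
proof -
  define rows where "rows = (\<lambda>i. vec n (\<lambda>j. if i < length L then (L ! i) j else 0) :: real vec)"
  define B where "B = mat\<^sub>r n n (\<lambda>i. if i = n - 1 then 0\<^sub>v n else rows i)"
  have B: "B \<in> carrier_mat n n" unfolding B_def by simp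
  have "det B = 0" unfolding B_def
    by (rule det_row_0) (use assms in \<open>auto simp: rows_def\<close>)
  then obtain v where v: "v \<in> carrier_vec n" "v \<noteq> 0\<^sub>v n" "B *\<^sub>v v = 0\<^sub>v n"
    using det_0_iff_vec_prod_zero_field[OF B] by blast
  have "\<exists>l<n. v $ l \<noteq> 0"
    using v(1,2) by (metis carrier_vecD eq_vecI index_zero_vec)
  moreover have "dot n w (\<lambda>l. v $ l) = 0" if "w \<in> set L" for w
  proof -
    obtain i where i: "i < length L" "L ! i = w" using \<open>w \<in> set L\<close> by (auto simp: in_set_conv_nth)
    then have "i < n - 1" using assms by simp
    then have "(B *\<^sub>v v) $ i = rows i \<bullet> v" using B unfolding B_def by (simp add: rows_def)
    also have "\<dots> = dot n w (\<lambda>l. v $ l)"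
      using v(1) i unfolding rows_def scalar_prod_def dot_def by (auto simp: atLeast0LessThan)
    finally show ?thesis using v(3) \<open>i < n - 1\<close> by simp
  qed
  ultimately show ?thesis by blast
qed

lemma exists_orthonormal_orthogonal:
  assumes "k + length L \<le> n"
  shows "\<exists>e. (\<forall>i<k. \<forall>j<k. dot n (e i) (e j) = (if i = j then 1 else 0)) \<and>
             (\<forall>i<k. \<forall>v\<in>set L. dot n (e i) v = 0)"
  using assms
proof (induction k)
  case (Suc k)
  then obtain e where e_orthonormal: "\<forall>i<k. \<forall>j<k. dot n (e i) (e j) = (if i = j then 1 else 0)"
     and e_orthogonal: "\<forall>i<k. \<forall>v\<in>set L. dot n (e i) v = 0" by auto
  have "length (L @ map e [0..<k]) < n" using Suc.prems by simp
  then obtain x where "\<exists>l<n. x l \<noteq> 0" and x: "\<forall>v\<in>set (L @ map e [0..<k]). dot n v x = 0"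
    using exists_nonzero_orthogonal by blast
  then have "dot n x x \<noteq> 0" using dot_self_eq_0D by blast
  then have norm_pos: "dot n x x > 0" using dot_self_nonneg[of n x] by linarith
  define y where "y = (\<lambda>l. x l / sqrt (dot n x x))"
  have "dot n y y = 1"
    unfolding y_def dot_divide_left dot_divide_right using norm_pos by simp
  moreover have "dot n y v = 0" "dot n v y = 0" if "v \<in> set L \<or> (\<exists>i<k. v = e i)" for v
    using x that unfolding y_def dot_divide_left dot_divide_right by (auto simp: dot_commute[of n x v])
  ultimately show ?case
    using e_orthonormal e_orthogonal
    by (intro exI[of _ "e(k := y)"]) (auto simp: less_Suc_eq)
qed simp

lemma rank_eq_if_right_inverse:
  fixes W :: "real mat"
  assumes W: "W \<in> carrier_mat N n" and V: "V \<in> carrier_mat n N" and "W * V = 1\<^sub>m N"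
  shows "vec_space.rank N W = N"
proof -
  interpret vec_space "TYPE(real)" N .
  have "W *\<^sub>v (V *\<^sub>v y) = y" if "y \<in> carrier_vec N" for y
    using assms that by (simp add: assoc_mult_mat_vec[symmetric])
  then have "col_space W = carrier_vec N"
    unfolding col_space_eq[OF W] using W V by (auto intro!: bexI[of _ "V *\<^sub>v y" for y])
  moreover have "col_space (1\<^sub>m N :: real mat) = carrier_vec N"
    unfolding col_space_eq[OF one_carrier_mat] by (auto intro!: bexI[of _ "y" for y])
  ultimately have "rank W = rank (1\<^sub>m N :: real mat)"
    unfolding rank_def col_space_def by simp
  also have "\<dots> = N" using det_rank_iff[OF one_carrier_mat] by simp
  finally show ?thesis .
qed

lemma rank_one_update_right_inverse:
  fixes u :: "real vec"
  assumes u: "u \<in> carrier_vec N" "u \<bullet> u = 1" and "\<rho> \<noteq> 0" "\<rho> + \<sigma> \<noteq> 0"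
  shows "(\<rho> \<cdot>\<^sub>m 1\<^sub>m N + \<sigma> \<cdot>\<^sub>m mat N N (\<lambda>(i, j). u $ i * u $ j)) *
      mat N N (\<lambda>(j, k). ((if j = k then 1 else 0) - \<sigma> / (\<rho> + \<sigma>) * u $ j * u $ k) / \<rho>) = 1\<^sub>m N"
    (is "?G * ?M = _")
proof (rule eq_matI)
  fix i k assume "i < dim_row (1\<^sub>m N :: real mat)" "k < dim_col (1\<^sub>m N :: real mat)"
  then have ik: "i < N" "k < N" by auto
  define \<kappa> where "\<kappa> = \<sigma> / (\<rho> + \<sigma>)"
  have uu: "(\<Sum>j<N. u $ j * u $ j) = 1" using u by (simp add: scalar_prod_def atLeast0LessThan)
  have "(?G * ?M) $$ (i, k) =
      (\<Sum>j<N. (if j = i then (if j = k then 1 else 0) - \<kappa> * u $ j * u $ k else 0)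
        + (if j = k then \<sigma> / \<rho> * u $ i * u $ j else 0)
        - \<sigma> * \<kappa> / \<rho> * u $ i * u $ k * (u $ j * u $ j))"
    using ik \<open>\<rho> \<noteq> 0\<close> unfolding \<kappa>_def[symmetric]
    by (auto simp: scalar_prod_def atLeast0LessThan field_simps intro!: sum.cong)
  also have "\<dots> = (\<Sum>j<N. if j = i then (if j = k then 1 else 0) - \<kappa> * u $ j * u $ k else 0)
      + (\<Sum>j<N. if j = k then \<sigma> / \<rho> * u $ i * u $ j else 0)
      - \<sigma> * \<kappa> / \<rho> * u $ i * u $ k * (\<Sum>j<N. u $ j * u $ j)"
    by (simp add: sum.distrib sum_subtractf sum_distrib_left)
  also have "\<dots> = 1\<^sub>m N $$ (i, k) + (\<sigma> / \<rho> - \<kappa> - \<sigma> * \<kappa> / \<rho>) * u $ i * u $ k"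
    using ik uu by (simp add: algebra_simps)
  also have "\<sigma> / \<rho> - \<kappa> - \<sigma> * \<kappa> / \<rho> = 0"
    using assms(3,4) unfolding \<kappa>_def by (simp add: field_simps)
  finally show "(?G * ?M) $$ (i, k) = 1\<^sub>m N $$ (i, k)" by simp
qed auto

lemma mat_inverse_SomeE:
  fixes A :: "'a :: field mat"
  assumes A: "A \<in> carrier_mat n n" and "det A \<noteq> 0"
  obtains B where "mat_inverse A = Some B" "A * B = 1\<^sub>m n" "B * A = 1\<^sub>m n" "B \<in> carrier_mat n n"
proof (cases "mat_inverse A")
  case None
  then show ?thesis
    using mat_inverse(1)[OF A None, where b = "()"] det_non_zero_imp_unit[OF assms, where b = "()"] by simp
qed (use mat_inverse(2)[OF A] in blast)

definition star_rows :: "nat \<Rightarrow> nat \<Rightarrow> real \<Rightarrow> real \<Rightarrow> (nat \<Rightarrow> nat \<Rightarrow> real) \<Rightarrow> (nat \<Rightarrow> real) \<Rightarrow> bool" where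
  "star_rows n N \<rho> \<sigma> R u \<longleftrightarrow>
     (\<forall>i<N. \<forall>j<N. dot n (R i) (R j) = (if i = j then \<rho> else 0) + \<sigma> * u i * u j) \<and>
     (\<forall>i<N. dot n (R i) (\<lambda>_. 1) = sqrt (real n * (\<sigma> + \<rho>)) * u i)"

lemma star_rows_two_iff:
  "star_rows n 2 \<rho> \<sigma> ((!) [f, g]) ((!) [x, y]) \<longleftrightarrow>
     dot n f f = \<rho> + \<sigma> * x * x \<and> dot n g g = \<rho> + \<sigma> * y * y \<and> dot n f g = \<sigma> * x * y \<and>
     dot n f (\<lambda>_. 1) = sqrt (real n * (\<sigma> + \<rho>)) * x \<and> dot n g (\<lambda>_. 1) = sqrt (real n * (\<sigma> + \<rho>)) * y"
  unfolding star_rows_def numeral_2_eq_2 All_less_Suc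
  by (auto simp: dot_commute[of n g f] mult_ac)

lemma star_rows_three_iff:
  "star_rows n 3 \<rho> \<sigma> ((!) [f, g, h]) ((!) [x, y, w]) \<longleftrightarrow>
     dot n f f = \<rho> + \<sigma> * x * x \<and> dot n g g = \<rho> + \<sigma> * y * y \<and> dot n h h = \<rho> + \<sigma> * w * w \<and>
     dot n f g = \<sigma> * x * y \<and> dot n f h = \<sigma> * x * w \<and> dot n g h = \<sigma> * y * w \<and>
     dot n f (\<lambda>_. 1) = sqrt (real n * (\<sigma> + \<rho>)) * x \<and> dot n g (\<lambda>_. 1) = sqrt (real n * (\<sigma> + \<rho>)) * y \<and>
     dot n h (\<lambda>_. 1) = sqrt (real n * (\<sigma> + \<rho>)) * w"
  unfolding star_rows_def numeral_3_eq_3 All_less_Suc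
  by (auto simp: dot_commute[of n g f] dot_commute[of n h f] dot_commute[of n h g] mult_ac)

lemma is_liftI:
  assumes "2 \<le> N" and "\<forall>l<n. R 0 l = Re (z l) \<and> R 1 l = Im (z l)"
    and "(\<Sum>i<N. u i * u i) = 1" and "\<rho> > 0" and "\<rho> + \<sigma> > 0" and "\<gamma> = \<sigma> / (\<sigma> + \<rho>)"
    and "star_rows n N \<rho> \<sigma> R u"
  shows "is_lift n z \<gamma> N (mat N n (\<lambda>(i, l). R i l))"
proof -
  let ?W = "mat N n (\<lambda>(i, l). R i l)" and ?u = "vec N u"
  have "?u \<bullet> ?u = 1" using assms(3) by (simp add: scalar_prod_def atLeast0LessThan)
  moreover have "?W * ?W\<^sup>T = \<rho> \<cdot>\<^sub>m 1\<^sub>m N + \<sigma> \<cdot>\<^sub>m mat N N (\<lambda>(i, j). ?u $ i * ?u $ j)"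
    using assms(7) unfolding star_rows_def dot_def
    by (intro eq_matI) (auto simp: scalar_prod_def atLeast0LessThan)
  moreover have "vec N (\<lambda>i. \<Sum>l<n. ?W $$ (i, l)) = sqrt (real n * (\<sigma> + \<rho>)) \<cdot>\<^sub>v ?u"
    using assms(7) unfolding star_rows_def dot_ones_right by (intro eq_vecI) auto
  ultimately show ?thesis
    using assms(1,2,4-6) unfolding is_lift_def by (intro conjI exI[of _ ?u]) auto
qed

lemma is_liftE:
  assumes "is_lift n z \<gamma> N W"
  obtains u \<rho> \<sigma> where "(\<Sum>i<N. u i * u i) = 1" and "\<rho> > 0" and "\<rho> + \<sigma> > 0"
    and "\<gamma> = \<sigma> / (\<sigma> + \<rho>)" and "star_rows n N \<rho> \<sigma> (\<lambda>i l. W $$ (i, l)) u"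
proof -
  from assms obtain u \<rho> \<sigma> where W: "W \<in> carrier_mat N n"
    and u: "u \<in> carrier_vec N" "u \<bullet> u = 1" and "\<rho> > 0" "\<rho> + \<sigma> > 0" "\<gamma> = \<sigma> / (\<sigma> + \<rho>)"
    and gram: "W * W\<^sup>T = \<rho> \<cdot>\<^sub>m 1\<^sub>m N + \<sigma> \<cdot>\<^sub>m mat N N (\<lambda>(i, j). u $ i * u $ j)"
    and sums: "vec N (\<lambda>i. \<Sum>l<n. W $$ (i, l)) = sqrt (real n * (\<sigma> + \<rho>)) \<cdot>\<^sub>v u"
    unfolding is_lift_def by blast
  have "dot n (\<lambda>l. W $$ (i, l)) (\<lambda>l. W $$ (j, l)) = (W * W\<^sup>T) $$ (i, j)" if "i < N" "j < N" for i j
    using W that by (simp add: dot_def scalar_prod_def atLeast0LessThan)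
  moreover have "(\<Sum>l<n. W $$ (i, l)) = vec N (\<lambda>i. \<Sum>l<n. W $$ (i, l)) $ i" if "i < N" for i
    using that by simp
  ultimately have "star_rows n N \<rho> \<sigma> (\<lambda>i l. W $$ (i, l)) (\<lambda>i. u $ i)"
    using u unfolding star_rows_def dot_ones_right gram sums by simp
  moreover have "(\<Sum>i<N. u $ i * u $ i) = 1" using u by (simp add: scalar_prod_def atLeast0LessThan)
  ultimately show ?thesis using that \<open>\<rho> > 0\<close> \<open>\<rho> + \<sigma> > 0\<close> \<open>\<gamma> = \<sigma> / (\<sigma> + \<rho>)\<close> by blast
qed

lemma is_full_lift_if_lift: "is_lift n z \<gamma> N W \<Longrightarrow> is_full_lift n z \<gamma> N W"
proof -
  assume "is_lift n z \<gamma> N W"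
  then obtain u \<rho> \<sigma> where W: "W \<in> carrier_mat N n" and u: "u \<in> carrier_vec N" "u \<bullet> u = 1"
    and "\<rho> > 0" "\<rho> + \<sigma> > 0"
    and gram: "W * W\<^sup>T = \<rho> \<cdot>\<^sub>m 1\<^sub>m N + \<sigma> \<cdot>\<^sub>m mat N N (\<lambda>(i, j). u $ i * u $ j)"
    unfolding is_lift_def by blast
  define M where "M = mat N N (\<lambda>(j, k). ((if j = k then 1 else 0) - \<sigma> / (\<rho> + \<sigma>) * u $ j * u $ k) / \<rho>)"
  have "W * (W\<^sup>T * M) = (W * W\<^sup>T) * M"
    using assoc_mult_mat[of W N n "W\<^sup>T" N M N] W by (simp add: M_def)
  also have "\<dots> = 1\<^sub>m N"
    unfolding gram M_def using u \<open>\<rho> > 0\<close> \<open>\<rho> + \<sigma> > 0\<close> by (intro rank_one_update_right_inverse) auto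
  finally have "vec_space.rank N W = N"
    using W by (intro rank_eq_if_right_inverse[of W N n "W\<^sup>T * M"]) (auto simp: M_def)
  then show ?thesis using \<open>is_lift n z \<gamma> N W\<close> unfolding is_full_lift_def by blast
qed

lemma star_rows_extend:
  assumes "k \<le> N" and "\<rho> > 0" and rows: "star_rows n k \<rho> \<sigma> R u"
    and orthonormal: "\<forall>i<N-k. \<forall>j<N-k. dot n (e i) (e j) = (if i = j then 1 else 0)"
    and orthogonal: "\<forall>i<N-k. (\<forall>j<k. dot n (e i) (R j) = 0) \<and> dot n (e i) (\<lambda>_. 1) = 0"
  shows "star_rows n N \<rho> \<sigma> (\<lambda>i. if i < k then R i else (\<lambda>l. sqrt \<rho> * e (i - k) l))
           (\<lambda>i. if i < k then u i else 0)"
proof -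
  have eR: "dot n (\<lambda>l. sqrt \<rho> * e (i - k) l) (R j) = 0" "dot n (R j) (\<lambda>l. sqrt \<rho> * e (i - k) l) = 0"
    if "\<not> i < k" "i < N" "j < k" for i j
    using orthogonal that by (auto simp: dot_scale_left dot_scale_right dot_commute[of n "R j"])
  have ee: "dot n (\<lambda>l. sqrt \<rho> * e (i - k) l) (\<lambda>l. sqrt \<rho> * e (j - k) l) = (if i = j then \<rho> else 0)"
    if "\<not> i < k" "\<not> j < k" "i < N" "j < N" for i j
    using orthonormal that \<open>\<rho> > 0\<close> by (auto simp: dot_scale_left dot_scale_right)
  show ?thesis
    unfolding star_rows_def
  proof (intro conjI allI impI)
    fix i j assume "i < N" "j < N"
    then show "dot n (if i < k then R i else (\<lambda>l. sqrt \<rho> * e (i - k) l))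
        (if j < k then R j else (\<lambda>l. sqrt \<rho> * e (j - k) l)) =
      (if i = j then \<rho> else 0) + \<sigma> * (if i < k then u i else 0) * (if j < k then u j else 0)"
      using rows eR ee unfolding star_rows_def by (cases "i < k"; cases "j < k") auto
  next
    fix i assume "i < N"
    then show "dot n (if i < k then R i else (\<lambda>l. sqrt \<rho> * e (i - k) l)) (\<lambda>_. 1) =
        sqrt (real n * (\<sigma> + \<rho>)) * (if i < k then u i else 0)"
      using rows orthogonal unfolding star_rows_def by (auto simp: dot_scale_left)
  qed
qed

lemma exists_lift_of_rows:
  assumes "2 \<le> k" and "k \<le> N" and "N - k + length L \<le> n"
    and "\<forall>l<n. R 0 l = Re (z l) \<and> R 1 l = Im (z l)" and "(\<Sum>i<k. u i * u i) = 1"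
    and "\<rho> > 0" and "\<rho> + \<sigma> > 0" and "\<gamma> = \<sigma> / (\<sigma> + \<rho>)" and "star_rows n k \<rho> \<sigma> R u"
    and span: "\<And>x. \<forall>v\<in>set L. dot n x v = 0 \<Longrightarrow> (\<forall>j<k. dot n x (R j) = 0) \<and> dot n x (\<lambda>_. 1) = 0"
  shows "\<exists>W. is_lift n z \<gamma> N W"
proof -
  obtain e where "\<forall>i<N-k. \<forall>j<N-k. dot n (e i) (e j) = (if i = j then 1 else 0)"
    and "\<forall>i<N-k. \<forall>v\<in>set L. dot n (e i) v = 0"
    using exists_orthonormal_orthogonal[OF assms(3)] by blast
  then have "star_rows n N \<rho> \<sigma> (\<lambda>i. if i < k then R i else (\<lambda>l. sqrt \<rho> * e (i - k) l))
      (\<lambda>i. if i < k then u i else 0)"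
    using assms(2,6,9) span by (intro star_rows_extend) auto
  moreover have "(\<Sum>i<N. (if i < k then u i else 0) * (if i < k then u i else 0)) = 1"
    using assms(2,5) by (subst sum.mono_neutral_cong_right[of "{..<N}" "{..<k}"]) auto
  ultimately have "is_lift n z \<gamma> N
      (mat N n (\<lambda>(i, l). (if i < k then R i else (\<lambda>l. sqrt \<rho> * e (i - k) l)) l))"
    using assms(1,2,4,6-8) by (intro is_liftI) auto
  then show ?thesis by blast
qed

locale lift_problem =
  fixes n :: nat and \<gamma> :: real and z :: "nat \<Rightarrow> complex" and \<rho> \<sigma> :: real
  assumes n_ge_3: "n \<ge> 3"
    and gamma_lt_1: "\<gamma> < 1"
    and nonzero: "\<exists>l<n. z l \<noteq> 0"
    and rel: "complex_of_real (\<gamma> / real n) * (\<Sum>l<n. z l)\<^sup>2 = (\<Sum>l<n. (z l)\<^sup>2)"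
    and rho_def: "\<rho> = (1/2) * (\<Sum>l<n. (cmod (z l))\<^sup>2) - \<gamma> / (2 * real n) * (cmod (\<Sum>l<n. z l))\<^sup>2"
    and sigma_def: "\<sigma> = \<gamma> * \<rho> / (1 - \<gamma>)"
begin

abbreviation \<alpha> :: "nat \<Rightarrow> real" where "\<alpha> \<equiv> \<lambda>l. Re (z l)"
abbreviation \<beta> :: "nat \<Rightarrow> real" where "\<beta> \<equiv> \<lambda>l. Im (z l)"
definition c :: real where "c = sqrt (real n * (\<sigma> + \<rho>))"

definition u1 :: real where "u1 = (\<Sum>l<n. Re (z l)) / c"
definition u2 :: real where "u2 = (\<Sum>l<n. Im (z l)) / c"
definition u3 :: real where "u3 = sqrt (1 - u1\<^sup>2 - u2\<^sup>2)"

lemma n_pos: "real n > 0"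
  using n_ge_3 by simp

lemma n_nonzero: "n \<noteq> 0"
  using n_ge_3 by simp

lemma rel_Re: "dot n \<alpha> \<alpha> - dot n \<beta> \<beta> = \<gamma> / real n * ((\<Sum>l<n. Re (z l))\<^sup>2 - (\<Sum>l<n. Im (z l))\<^sup>2)"
proof -
  have "Re (complex_of_real (\<gamma> / real n) * (\<Sum>l<n. z l)\<^sup>2) = Re (\<Sum>l<n. (z l)\<^sup>2)"
    using rel by simp
  then show ?thesis
    unfolding dot_def by (simp add: Re_power2 Re_sum Im_sum sum_subtractf power2_eq_square)
qed

lemma rel_Im: "dot n \<alpha> \<beta> = \<gamma> / real n * (\<Sum>l<n. Re (z l)) * (\<Sum>l<n. Im (z l))"
proof -
  have "Im ((\<Sum>l<n. z l)\<^sup>2) = 2 * (\<Sum>l<n. Re (z l)) * (\<Sum>l<n. Im (z l))"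
    by (simp add: Im_power2 Re_sum Im_sum)
  moreover have "Im (\<Sum>l<n. (z l)\<^sup>2) = 2 * dot n \<alpha> \<beta>"
    unfolding dot_def by (simp add: Im_power2 sum_distrib_left mult.assoc)
  moreover have "Im (complex_of_real (\<gamma> / real n) * (\<Sum>l<n. z l)\<^sup>2) = Im (\<Sum>l<n. (z l)\<^sup>2)"
    using rel by simp
  ultimately show ?thesis using n_pos by (simp add: field_simps)
qed

lemma rho_eq:
  "\<rho> = (dot n \<alpha> \<alpha> + dot n \<beta> \<beta>) / 2 - \<gamma> / (2 * real n) * ((\<Sum>l<n. Re (z l))\<^sup>2 + (\<Sum>l<n. Im (z l))\<^sup>2)"
  unfolding rho_def cmod_power2 dot_def by (simp add: Re_sum Im_sum sum.distrib power2_eq_square)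

lemma dot_alpha_alpha_eq: "dot n \<alpha> \<alpha> = \<rho> + \<gamma> * (\<Sum>l<n. Re (z l))\<^sup>2 / real n"
  using rel_Re rho_eq n_pos by (simp add: field_simps)

lemma dot_beta_beta_eq: "dot n \<beta> \<beta> = \<rho> + \<gamma> * (\<Sum>l<n. Im (z l))\<^sup>2 / real n"
  using rel_Re rho_eq n_pos by (simp add: field_simps)

lemma rho_pos: "\<rho> > 0"
proof -
  obtain l0 where "l0 < n" "z l0 \<noteq> 0" using nonzero by blast
  then have "Re (z l0) * Re (z l0) + Im (z l0) * Im (z l0) > 0"
    by (simp add: complex_eq_iff sum_squares_gt_zero_iff)
  also have "\<dots> \<le> (\<Sum>l<n. Re (z l) * Re (z l) + Im (z l) * Im (z l))"
    using \<open>l0 < n\<close> by (intro member_le_sum) auto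
  finally have norms_pos: "dot n \<alpha> \<alpha> + dot n \<beta> \<beta> > 0"
    unfolding dot_def by (simp add: sum.distrib)
  show ?thesis
  proof (cases "\<gamma> \<le> 0")
    case True
    then have "\<gamma> * (\<Sum>l<n. Re (z l))\<^sup>2 / real n \<le> 0" "\<gamma> * (\<Sum>l<n. Im (z l))\<^sup>2 / real n \<le> 0"
      using n_pos by (auto intro!: divide_nonpos_pos mult_nonpos_nonneg)
    then show ?thesis using dot_alpha_alpha_eq dot_beta_beta_eq norms_pos by linarith
  next
    case False
    then have "\<gamma> * (\<Sum>l<n. Re (z l))\<^sup>2 / real n \<le> \<gamma> * dot n \<alpha> \<alpha>"
      "\<gamma> * (\<Sum>l<n. Im (z l))\<^sup>2 / real n \<le> \<gamma> * dot n \<beta> \<beta>"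
      using square_sum_le_dot_self[of "\<lambda>l. Re (z l)" n] square_sum_le_dot_self[of "\<lambda>l. Im (z l)" n] n_pos
      by (simp_all add: field_simps)
    moreover have "\<gamma> * dot n \<alpha> \<alpha> + \<gamma> * dot n \<beta> \<beta> < dot n \<alpha> \<alpha> + dot n \<beta> \<beta>"
      using mult_strict_right_mono[OF gamma_lt_1 norms_pos] by (simp add: algebra_simps)
    ultimately show ?thesis
      using dot_alpha_alpha_eq dot_beta_beta_eq by linarith
  qed
qed

lemma sigma_plus_rho: "\<sigma> + \<rho> = \<rho> / (1 - \<gamma>)"
  unfolding sigma_def using gamma_lt_1 by (simp add: field_simps)

lemma sigma_plus_rho_pos: "\<sigma> + \<rho> > 0"
  unfolding sigma_plus_rho using rho_pos gamma_lt_1 by simp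

lemma gamma_eq: "\<gamma> = \<sigma> / (\<sigma> + \<rho>)"
  unfolding sigma_plus_rho sigma_def using gamma_lt_1 rho_pos by (simp add: field_simps)

lemma c_pos: "c > 0"
  unfolding c_def using sigma_plus_rho_pos n_pos by simp

lemma c_square: "c * c = real n * (\<sigma> + \<rho>)"
  unfolding c_def using sigma_plus_rho_pos n_pos by simp

lemma sigma_u_u:
  assumes "x = (\<Sum>l<n. f l) / c" and "y = (\<Sum>l<n. g l) / c"
  shows "\<sigma> * x * y = \<gamma> * (\<Sum>l<n. f l) * (\<Sum>l<n. g l) / real n"
proof -
  have "\<sigma> * x * y = \<sigma> * (\<Sum>l<n. f l) * (\<Sum>l<n. g l) / (c * c)" unfolding assms by simp
  also have "\<dots> = \<sigma> / (\<sigma> + \<rho>) * (\<Sum>l<n. f l) * (\<Sum>l<n. g l) / real n"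
    unfolding c_square using n_pos sigma_plus_rho_pos by simp
  finally show ?thesis unfolding gamma_eq .
qed

lemma gram_alpha_beta:
  "dot n \<alpha> \<alpha> = \<rho> + \<sigma> * u1 * u1" "dot n \<beta> \<beta> = \<rho> + \<sigma> * u2 * u2" "dot n \<alpha> \<beta> = \<sigma> * u1 * u2"
  "dot n \<alpha> (\<lambda>_. 1) = c * u1" "dot n \<beta> (\<lambda>_. 1) = c * u2"
proof -
  show "dot n \<alpha> \<alpha> = \<rho> + \<sigma> * u1 * u1"
    using dot_alpha_alpha_eq sigma_u_u[OF u1_def u1_def] by (simp add: power2_eq_square)
  show "dot n \<beta> \<beta> = \<rho> + \<sigma> * u2 * u2"
    using dot_beta_beta_eq sigma_u_u[OF u2_def u2_def] by (simp add: power2_eq_square)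
  show "dot n \<alpha> \<beta> = \<sigma> * u1 * u2"
    using rel_Im sigma_u_u[OF u1_def u2_def] by simp
  have "c \<noteq> 0" using c_pos by simp
  then show "dot n \<alpha> (\<lambda>_. 1) = c * u1" "dot n \<beta> (\<lambda>_. 1) = c * u2"
    unfolding u1_def u2_def dot_ones_right by simp_all
qed

lemma dot_self_deviation:
  "dot n (\<lambda>l. (real n * u1) * \<alpha> l + (real n * u2) * \<beta> l + - (c * (u1\<^sup>2 + u2\<^sup>2)))
         (\<lambda>l. (real n * u1) * \<alpha> l + (real n * u2) * \<beta> l + - (c * (u1\<^sup>2 + u2\<^sup>2)))
   = real n * real n * \<rho> * (u1\<^sup>2 + u2\<^sup>2) * (1 - (u1\<^sup>2 + u2\<^sup>2))"
proof -
  have "dot n (\<lambda>l. (real n * u1) * \<alpha> l + (real n * u2) * \<beta> l + - (c * (u1\<^sup>2 + u2\<^sup>2)))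
         (\<lambda>l. (real n * u1) * \<alpha> l + (real n * u2) * \<beta> l + - (c * (u1\<^sup>2 + u2\<^sup>2)))
      = real n * real n * (\<rho> * (u1\<^sup>2 + u2\<^sup>2) + \<sigma> * (u1\<^sup>2 + u2\<^sup>2)\<^sup>2) - real n * (c * c) * (u1\<^sup>2 + u2\<^sup>2)\<^sup>2"
    unfolding dot_affine_self gram_alpha_beta by (simp add: algebra_simps power2_eq_square)
  also have "\<dots> = real n * real n * \<rho> * (u1\<^sup>2 + u2\<^sup>2) * (1 - (u1\<^sup>2 + u2\<^sup>2))"
    unfolding c_square by (simp add: algebra_simps power2_eq_square)
  finally show ?thesis .
qed

lemma u_square_le_1: "u1\<^sup>2 + u2\<^sup>2 \<le> 1"
proof (rule ccontr)
  assume "\<not> ?thesis"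
  then have "real n * real n * \<rho> * (u1\<^sup>2 + u2\<^sup>2) * (1 - (u1\<^sup>2 + u2\<^sup>2)) < 0"
    using rho_pos n_pos by (simp add: mult_pos_neg)
  then show False
    using dot_self_nonneg[of n "\<lambda>l. (real n * u1) * \<alpha> l + (real n * u2) * \<beta> l + - (c * (u1\<^sup>2 + u2\<^sup>2))"]
    unfolding dot_self_deviation by linarith
qed

lemma u3_square: "u3 * u3 = 1 - u1 * u1 - u2 * u2"
  unfolding u3_def using u_square_le_1 by (simp add: power2_eq_square)

lemma u3_pos: "u1\<^sup>2 + u2\<^sup>2 < 1 \<Longrightarrow> u3 > 0"
  unfolding u3_def by simp

lemma degeneracy_eq:
  "real n * (\<Sum>l<n. (cmod (z l))\<^sup>2) + (\<gamma> - 2) * (cmod (\<Sum>l<n. z l))\<^sup>2 = 2 * real n * \<rho> * (1 - (u1\<^sup>2 + u2\<^sup>2))"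
proof -
  have norms: "(\<Sum>l<n. (cmod (z l))\<^sup>2) = 2 * \<rho> + \<sigma> * (u1\<^sup>2 + u2\<^sup>2)"
    unfolding cmod_power2 using gram_alpha_beta(1,2)
    by (simp add: dot_def sum.distrib power2_eq_square algebra_simps)
  have "(cmod (\<Sum>l<n. z l))\<^sup>2 = c * c * (u1\<^sup>2 + u2\<^sup>2)"
    unfolding cmod_power2 using gram_alpha_beta(4,5)
    by (simp add: dot_ones_right power2_eq_square algebra_simps)
  then have norm_sum: "(cmod (\<Sum>l<n. z l))\<^sup>2 = real n * (\<sigma> + \<rho>) * (u1\<^sup>2 + u2\<^sup>2)"
    unfolding c_square .
  have gamma_sigma_rho: "\<gamma> * (\<sigma> + \<rho>) = \<sigma>"
    using gamma_eq sigma_plus_rho_pos by simp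
  have "(\<gamma> - 2) * (real n * (\<sigma> + \<rho>) * (u1\<^sup>2 + u2\<^sup>2)) =
      real n * (u1\<^sup>2 + u2\<^sup>2) * (\<gamma> * (\<sigma> + \<rho>)) - 2 * real n * (\<sigma> + \<rho>) * (u1\<^sup>2 + u2\<^sup>2)"
    by (simp add: algebra_simps)
  then show ?thesis
    unfolding norms norm_sum gamma_sigma_rho by (simp add: algebra_simps)
qed

lemma exists_lift_degenerate:
  assumes "3 \<le> N" and "N \<le> n" and "u1\<^sup>2 + u2\<^sup>2 = 1"
  shows "\<exists>W. is_lift n z \<gamma> N W"
proof (rule exists_lift_of_rows[of 2 N "[\<alpha>, \<beta>]" n "(!) [\<alpha>, \<beta>]" z "(!) [u1, u2]"])
  have "dot n (\<lambda>l. (real n * u1) * \<alpha> l + (real n * u2) * \<beta> l - c)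
      (\<lambda>l. (real n * u1) * \<alpha> l + (real n * u2) * \<beta> l - c) = 0"
    using dot_self_deviation assms(3) by simp
  then have on_line: "(real n * u1) * \<alpha> l + (real n * u2) * \<beta> l = c" if "l < n" for l
    using dot_self_eq_0D[OF _ that] by fastforce
  fix x assume "\<forall>v\<in>set [\<alpha>, \<beta>]. dot n x v = 0"
  then have "dot n (\<lambda>l. (real n * u1) * \<alpha> l + (real n * u2) * \<beta> l) x = 0"
    by (simp add: dot_lincomb2_left dot_commute[of n x])
  also have "dot n (\<lambda>l. (real n * u1) * \<alpha> l + (real n * u2) * \<beta> l) x = dot n (\<lambda>_. c) x"
    unfolding dot_def using on_line by (intro sum.cong) auto
  finally have "dot n x (\<lambda>_. 1) = 0"
    using c_pos by (simp add: dot_def sum_distrib_left[symmetric])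
  then show "(\<forall>j<2. dot n x ([\<alpha>, \<beta>] ! j) = 0) \<and> dot n x (\<lambda>_. 1) = 0"
    using \<open>\<forall>v\<in>set [\<alpha>, \<beta>]. dot n x v = 0\<close> by (simp add: less_2_cases_iff)
next
  show "(\<Sum>i<2. [u1, u2] ! i * [u1, u2] ! i) = 1"
    using assms(3) by (simp add: numeral_2_eq_2 power2_eq_square)
  show "star_rows n 2 \<rho> \<sigma> ((!) [\<alpha>, \<beta>]) ((!) [u1, u2])"
    using gram_alpha_beta by (simp add: star_rows_two_iff c_def)
  show "\<forall>l<n. ([\<alpha>, \<beta>] ! 0) l = Re (z l) \<and> ([\<alpha>, \<beta>] ! 1) l = Im (z l)"
    by simp
qed (use assms rho_pos sigma_plus_rho_pos gamma_eq in simp_all)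

definition \<tau> :: "nat \<Rightarrow> real" where
  "\<tau> = (\<lambda>l. (- real n * u1) * \<alpha> l + (- real n * u2) * \<beta> l + c)"

definition t :: "nat \<Rightarrow> real" where
  "t = (\<lambda>l. \<tau> l / (real n * u3))"

lemma gram_tau:
  "dot n \<tau> \<alpha> = real n * \<sigma> * u1 * (u3 * u3)" "dot n \<tau> \<beta> = real n * \<sigma> * u2 * (u3 * u3)"
  "dot n \<tau> (\<lambda>_. 1) = real n * c * (u3 * u3)"
  "dot n \<tau> \<tau> = real n * real n * (u3 * u3) * (\<rho> + \<sigma> * (u3 * u3))"
proof -
  have "dot n \<tau> \<alpha> = real n * u1 * (- \<rho> - \<sigma> * (u1 * u1 + u2 * u2)) + c * c * u1"
    unfolding \<tau>_def dot_affine_left dot_commute[of n \<beta> \<alpha>] dot_commute[of n "\<lambda>_. 1" \<alpha>] gram_alpha_beta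
    by (simp add: algebra_simps)
  then show \<tau>_\<alpha>: "dot n \<tau> \<alpha> = real n * \<sigma> * u1 * (u3 * u3)"
    unfolding c_square u3_square by (simp add: algebra_simps)
  have "dot n \<tau> \<beta> = real n * u2 * (- \<rho> - \<sigma> * (u1 * u1 + u2 * u2)) + c * c * u2"
    unfolding \<tau>_def dot_affine_left dot_commute[of n "\<lambda>_. 1" \<beta>] gram_alpha_beta
    by (simp add: algebra_simps)
  then show \<tau>_\<beta>: "dot n \<tau> \<beta> = real n * \<sigma> * u2 * (u3 * u3)"
    unfolding c_square u3_square by (simp add: algebra_simps)
  have "dot n \<tau> (\<lambda>_. 1) = real n * c * (1 - u1 * u1 - u2 * u2)"
    unfolding \<tau>_def dot_affine_left dot_ones_ones gram_alpha_beta by (simp add: algebra_simps)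
  then show \<tau>_ones: "dot n \<tau> (\<lambda>_. 1) = real n * c * (u3 * u3)"
    unfolding u3_square .
  have "dot n \<tau> \<tau> = - real n * u1 * dot n \<tau> \<alpha> - real n * u2 * dot n \<tau> \<beta> + c * dot n \<tau> (\<lambda>_. 1)"
    unfolding \<tau>_def dot_affine_left dot_commute[of n _ "\<lambda>l. (- real n * u1) * \<alpha> l + (- real n * u2) * \<beta> l + c"]
    by simp
  also have "\<dots> = real n * (u3 * u3) * (real n * \<sigma> * (- u1 * u1 - u2 * u2) + c * c)"
    unfolding \<tau>_\<alpha> \<tau>_\<beta> \<tau>_ones by (simp add: algebra_simps)
  finally show "dot n \<tau> \<tau> = real n * real n * (u3 * u3) * (\<rho> + \<sigma> * (u3 * u3))"
    unfolding c_square u3_square by (simp add: algebra_simps)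
qed

lemma gram_t:
  assumes "u1\<^sup>2 + u2\<^sup>2 < 1"
  shows "dot n t \<alpha> = \<sigma> * u1 * u3" "dot n t \<beta> = \<sigma> * u2 * u3" "dot n t (\<lambda>_. 1) = c * u3"
    and "dot n t t = \<rho> + \<sigma> * u3 * u3"
  using u3_pos[OF assms] n_pos unfolding t_def dot_divide_left dot_divide_right gram_tau
  by (simp_all add: field_simps)

lemma star_rows_signed_t:
  assumes "u1\<^sup>2 + u2\<^sup>2 < 1" and "s * s = 1"
  shows "star_rows n 3 \<rho> \<sigma> ((!) [\<alpha>, \<beta>, \<lambda>l. s * t l]) ((!) [u1, u2, s * u3])"
  unfolding star_rows_three_iff dot_scale_left dot_scale_right dot_commute[of n \<alpha> t]
    dot_commute[of n \<beta> t] gram_alpha_beta gram_t[OF assms(1)] c_def[symmetric]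
  using assms(2) by (simp add: algebra_simps)

lemma exists_lift_nondegenerate:
  assumes "3 \<le> N" and "N \<le> n" and "u1\<^sup>2 + u2\<^sup>2 < 1"
  shows "\<exists>W. is_lift n z \<gamma> N W"
proof (rule exists_lift_of_rows[of 3 N "[\<alpha>, \<beta>, \<lambda>_. 1]" n "(!) [\<alpha>, \<beta>, \<lambda>l. 1 * t l]" z "(!) [u1, u2, 1 * u3]"])
  fix x assume x: "\<forall>v\<in>set [\<alpha>, \<beta>, \<lambda>_. 1]. dot n x v = 0"
  then have "dot n x \<tau> = 0"
    unfolding \<tau>_def dot_commute[of n x] dot_affine_left by (simp add: dot_commute[of n x])
  then have "dot n x (\<lambda>l. 1 * t l) = 0"
    unfolding t_def by (simp add: dot_divide_right)
  then show "(\<forall>j<3. dot n x ([\<alpha>, \<beta>, \<lambda>l. 1 * t l] ! j) = 0) \<and> dot n x (\<lambda>_. 1) = 0"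
    using x by (simp add: numeral_3_eq_3 less_Suc_eq)
next
  show "(\<Sum>i<3. [u1, u2, 1 * u3] ! i * [u1, u2, 1 * u3] ! i) = 1"
    using u3_square by (simp add: numeral_3_eq_3)
  show "star_rows n 3 \<rho> \<sigma> ((!) [\<alpha>, \<beta>, \<lambda>l. 1 * t l]) ((!) [u1, u2, 1 * u3])"
    using star_rows_signed_t[OF assms(3), of 1] by simp
  show "\<forall>l<n. ([\<alpha>, \<beta>, \<lambda>l. 1 * t l] ! 0) l = Re (z l) \<and> ([\<alpha>, \<beta>, \<lambda>l. 1 * t l] ! 1) l = Im (z l)"
    by simp
qed (use assms rho_pos sigma_plus_rho_pos gamma_eq in simp_all)

lemma exists_full_lift:
  assumes "3 \<le> N" and "N \<le> n"
  shows "\<exists>W. is_full_lift n z \<gamma> N W"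
  using exists_lift_degenerate[OF assms] exists_lift_nondegenerate[OF assms] u_square_le_1 is_full_lift_if_lift
  by force

lemma lift_invariants_unique:
  assumes "2 \<le> k" and "star_rows n k \<rho>' \<sigma>' R v" and "\<rho>' + \<sigma>' > 0" and "\<gamma> = \<sigma>' / (\<sigma>' + \<rho>')"
    and "\<forall>l<n. R 0 l = Re (z l) \<and> R 1 l = Im (z l)"
  shows "\<rho>' = \<rho>" and "\<sigma>' = \<sigma>" and "v 0 = u1" and "v 1 = u2"
proof -
  define c' where "c' = sqrt (real n * (\<sigma>' + \<rho>'))"
  have "c' > 0" "c' * c' = real n * (\<sigma>' + \<rho>')"
    unfolding c'_def using assms(3) n_pos by simp_all
  have gram: "dot n (R i) (R i) = \<rho>' + \<sigma>' * v i * v i" "(\<Sum>l<n. R i l) = c' * v i" if "i < k" for i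
    using assms(2) that unfolding star_rows_def c'_def dot_ones_right by simp_all
  have "dot n (R 0) (R 0) = dot n \<alpha> \<alpha>" "(\<Sum>l<n. R 0 l) = (\<Sum>l<n. Re (z l))"
    "(\<Sum>l<n. R 1 l) = (\<Sum>l<n. Im (z l))"
    using assms(5) by (auto intro!: dot_cong sum.cong)
  then have rows: "dot n \<alpha> \<alpha> = \<rho>' + \<sigma>' * v 0 * v 0" "(\<Sum>l<n. Re (z l)) = c' * v 0"
    "(\<Sum>l<n. Im (z l)) = c' * v 1"
    using gram[of 0] gram[of 1] assms(1) by simp_all
  have "\<gamma> * (\<Sum>l<n. Re (z l))\<^sup>2 / real n = \<sigma>' / (\<sigma>' + \<rho>') * (c' * c') * (v 0 * v 0) / real n"
    unfolding rows(2) assms(4) by (simp add: power2_eq_square algebra_simps)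
  also have "\<dots> = \<sigma>' * v 0 * v 0"
    unfolding \<open>c' * c' = _\<close> using assms(3) n_pos by simp
  finally have "\<gamma> * (\<Sum>l<n. Re (z l))\<^sup>2 / real n = \<sigma>' * v 0 * v 0" .
  then show "\<rho>' = \<rho>" using dot_alpha_alpha_eq rows(1) by simp
  then show "\<sigma>' = \<sigma>"
    using assms(3,4) gamma_lt_1 unfolding sigma_def by (simp add: field_simps)
  then have "c' = c" unfolding c'_def c_def \<open>\<rho>' = \<rho>\<close> by simp
  then show "v 0 = u1" "v 1 = u2"
    unfolding u1_def u2_def rows using \<open>c' > 0\<close> by simp_all
qed

lemma mat_of_rows_three:
  "mat_of_rows n [vec n f, vec n g, vec n h] = mat 3 n (\<lambda>(i, l). ([f, g, h] ! i) l)"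
  by (rule eq_matI) (auto simp: mat_of_rows_index numeral_3_eq_3 less_Suc_eq)

lemma signed_t_is_lift3:
  assumes "u1\<^sup>2 + u2\<^sup>2 < 1" and "s = 1 \<or> s = -1"
  shows "is_lift n z \<gamma> 3 (mat_of_rows n [vec n \<alpha>, vec n \<beta>, s \<cdot>\<^sub>v vec n t])"
proof -
  have "s * s = 1" using assms(2) by auto
  have "is_lift n z \<gamma> 3 (mat 3 n (\<lambda>(i, l). ([\<alpha>, \<beta>, \<lambda>l. s * t l] ! i) l))"
  proof (rule is_liftI)
    have "s * u3 * (s * u3) = u3 * u3"
      using \<open>s * s = 1\<close> by (metis mult.assoc mult.left_commute mult_1)
    then show "(\<Sum>i<3. [u1, u2, s * u3] ! i * [u1, u2, s * u3] ! i) = 1"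
      using u3_square by (simp add: numeral_3_eq_3)
    show "star_rows n 3 \<rho> \<sigma> ((!) [\<alpha>, \<beta>, \<lambda>l. s * t l]) ((!) [u1, u2, s * u3])"
      using star_rows_signed_t[OF assms(1) \<open>s * s = 1\<close>] .
  qed (use rho_pos sigma_plus_rho_pos gamma_eq in simp_all)
  moreover have "s \<cdot>\<^sub>v vec n t = vec n (\<lambda>l. s * t l)" by auto
  ultimately show ?thesis by (simp add: mat_of_rows_three)
qed

lemma dot_tau_left:
  "dot n \<tau> f = - real n * u1 * dot n \<alpha> f - real n * u2 * dot n \<beta> f + c * dot n (\<lambda>_. 1) f"
  unfolding \<tau>_def dot_affine_left by simp

lemma eq_signed_t_if_same_products:
  assumes "u1\<^sup>2 + u2\<^sup>2 < 1" and "s * s = 1"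
    and "dot n \<alpha> r = s * (\<sigma> * u1 * u3)" and "dot n \<beta> r = s * (\<sigma> * u2 * u3)"
    and "dot n (\<lambda>_. 1) r = s * (c * u3)" and "dot n r r = \<rho> + \<sigma> * u3 * u3" and "l < n"
  shows "r l = s * t l"
proof -
  have "dot n r t = dot n \<tau> r / (real n * u3)"
    unfolding t_def dot_divide_right dot_commute[of n r] ..
  also have "\<dots> = s * (dot n \<tau> t / (real n * u3))"
    unfolding dot_tau_left assms(3-5) dot_commute[of n \<alpha> t] dot_commute[of n \<beta> t]
      dot_commute[of n "\<lambda>_. 1" t] gram_t[OF assms(1)]
    by (simp add: algebra_simps)
  also have "dot n \<tau> t / (real n * u3) = dot n t t"
    unfolding t_def dot_divide_left ..
  finally have "dot n r t = s * dot n t t" .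
  then show ?thesis
    using eq_sign_times_if_dot_eq[of n r t s l] assms(2,6,7) gram_t[OF assms(1)] by simp
qed

lemma lift3_imp_signed_t:
  assumes "u1\<^sup>2 + u2\<^sup>2 < 1" and "is_lift n z \<gamma> 3 W"
  shows "\<exists>s. (s = 1 \<or> s = -1) \<and> W = mat_of_rows n [vec n \<alpha>, vec n \<beta>, s \<cdot>\<^sub>v vec n t]"
proof -
  obtain v \<rho>' \<sigma>' where v: "(\<Sum>i<3. v i * v i) = 1" and "\<rho>' + \<sigma>' > 0" and "\<gamma> = \<sigma>' / (\<sigma>' + \<rho>')"
    and rows: "star_rows n 3 \<rho>' \<sigma>' (\<lambda>i l. W $$ (i, l)) v"
    using is_liftE[OF assms(2)] by blast
  have W: "W \<in> carrier_mat 3 n" and W01: "\<forall>l<n. W $$ (0, l) = Re (z l) \<and> W $$ (1, l) = Im (z l)"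
    using assms(2) unfolding is_lift_def by auto
  note invariants = lift_invariants_unique[OF _ rows \<open>\<rho>' + \<sigma>' > 0\<close> \<open>\<gamma> = _\<close> W01]
  have "v 2 * v 2 = u3 * u3"
    using v invariants u3_square by (simp add: eval_nat_numeral algebra_simps)
  define s where "s = v 2 / u3"
  have "u3 > 0" using u3_pos[OF assms(1)] .
  then have v2: "v 2 = s * u3" and "s * s = 1"
    using \<open>v 2 * v 2 = u3 * u3\<close> unfolding s_def by (simp_all add: field_simps)
  define r where "r = (\<lambda>l. W $$ (2, l))"
  have r_rows: "dot n r (\<lambda>l. W $$ (j, l)) = (if j = 2 then \<rho> else 0) + \<sigma> * (s * u3) * v j"
    if "j < 3" for j
    using rows that invariants(1,2) v2 unfolding star_rows_def r_def by simp
  have "dot n r (\<lambda>l. W $$ (0, l)) = dot n r \<alpha>" "dot n r (\<lambda>l. W $$ (1, l)) = dot n r \<beta>"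
    using W01 by (auto intro!: dot_cong)
  then have "dot n \<alpha> r = s * (\<sigma> * u1 * u3)" "dot n \<beta> r = s * (\<sigma> * u2 * u3)"
    using r_rows[of 0] r_rows[of 1] invariants(3,4) by (simp_all add: dot_commute[of n _ r] algebra_simps)
  moreover have "dot n (\<lambda>_. 1) r = s * (c * u3)"
    using rows invariants(1,2) v2 unfolding star_rows_def r_def c_def by (simp add: dot_commute[of n "\<lambda>_. 1"])
  moreover have "dot n r r = \<rho> + \<sigma> * u3 * u3"
    using r_rows[of 2] v2 \<open>s * s = 1\<close> unfolding r_def by (simp add: algebra_simps)
  ultimately have "r l = s * t l" if "l < n" for l
    using eq_signed_t_if_same_products[OF assms(1) \<open>s * s = 1\<close>] that by blast
  then have "W = mat_of_rows n [vec n \<alpha>, vec n \<beta>, s \<cdot>\<^sub>v vec n t]"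
    using W W01 unfolding r_def
    by (intro eq_matI) (auto simp: mat_of_rows_index eval_nat_numeral less_Suc_eq)
  moreover have "s = 1 \<or> s = -1" using \<open>s * s = 1\<close> by (metis square_eq_1_iff)
  ultimately show ?thesis by blast
qed

abbreviation A :: "real mat" where "A \<equiv> mat_of_rows n [vec n \<alpha>, vec n \<beta>, vec n (\<lambda>_. 1)]"

lemma affine_orthogonal_imp_zero:
  assumes "u1\<^sup>2 + u2\<^sup>2 < 1"
    and "dot n \<alpha> (\<lambda>l. a * \<alpha> l + b * \<beta> l + d) = 0" and "dot n \<beta> (\<lambda>l. a * \<alpha> l + b * \<beta> l + d) = 0"
    and "dot n (\<lambda>_. 1) (\<lambda>l. a * \<alpha> l + b * \<beta> l + d) = 0"
  shows "a = 0 \<and> b = 0 \<and> d = 0"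
proof -
  have E0: "a * (\<rho> + \<sigma> * u1 * u1) + b * (\<sigma> * u1 * u2) + d * (c * u1) = 0"
    using assms(2) unfolding dot_commute[of n \<alpha> "\<lambda>l. a * \<alpha> l + b * \<beta> l + d"] dot_affine_left dot_commute[of n \<beta> \<alpha>] dot_commute[of n "\<lambda>_. 1" \<alpha>] gram_alpha_beta .
  have E1: "a * (\<sigma> * u1 * u2) + b * (\<rho> + \<sigma> * u2 * u2) + d * (c * u2) = 0"
    using assms(3) unfolding dot_commute[of n \<beta> "\<lambda>l. a * \<alpha> l + b * \<beta> l + d"] dot_affine_left dot_commute[of n "\<lambda>_. 1" \<beta>] gram_alpha_beta .
  have E2: "a * (c * u1) + b * (c * u2) + d * real n = 0"
    using assms(4) unfolding dot_commute[of n "\<lambda>_. 1" "\<lambda>l. a * \<alpha> l + b * \<beta> l + d"] dot_affine_left dot_ones_ones gram_alpha_beta .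
  define p where "p = a * u1 + b * u2"
  have "real n * \<rho> * (a - u1 * p) =
      real n * (a * (\<rho> + \<sigma> * u1 * u1) + b * (\<sigma> * u1 * u2) + d * (c * u1))
      - c * u1 * (a * (c * u1) + b * (c * u2) + d * real n) + u1 * p * (c * c - real n * (\<sigma> + \<rho>))"
    unfolding p_def by (simp add: algebra_simps)
  then have a: "a = u1 * p" using E0 E2 c_square rho_pos n_pos by simp
  have "real n * \<rho> * (b - u2 * p) =
      real n * (a * (\<sigma> * u1 * u2) + b * (\<rho> + \<sigma> * u2 * u2) + d * (c * u2))
      - c * u2 * (a * (c * u1) + b * (c * u2) + d * real n) + u2 * p * (c * c - real n * (\<sigma> + \<rho>))"
    unfolding p_def by (simp add: algebra_simps)
  then have b: "b = u2 * p" using E1 E2 c_square rho_pos n_pos by simp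
  have "p = u1 * a + u2 * b" unfolding p_def by (simp add: mult.commute)
  also have "\<dots> = (u1\<^sup>2 + u2\<^sup>2) * p"
    unfolding a b by (simp add: power2_eq_square algebra_simps)
  finally have "p = 0" using assms(1) by (metis less_irrefl mult_cancel_right2)
  then show ?thesis using a b E2 n_pos by simp
qed

lemma A_carrier: "A \<in> carrier_mat 3 n"
  unfolding carrier_mat_def by (simp add: numeral_3_eq_3)

lemma A_mult_vec: "A *\<^sub>v vec n f = vec 3 (\<lambda>i. dot n ([\<alpha>, \<beta>, \<lambda>_. 1] ! i) f)"
  by (intro eq_vecI) (auto simp: mat_of_rows_three dot_def scalar_prod_def atLeast0LessThan)

lemma A_transpose_mult_vec:
  assumes "y \<in> carrier_vec 3"
  shows "(A)\<^sup>T *\<^sub>v y =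
    vec n (\<lambda>l. y $ 0 * \<alpha> l + y $ 1 * \<beta> l + y $ 2)"
  using assms by (intro eq_vecI)
    (auto simp: mat_of_rows_three scalar_prod_def eval_nat_numeral atLeast0LessThan lessThan_Suc)

lemma det_gram_nonzero:
  assumes "u1\<^sup>2 + u2\<^sup>2 < 1"
  shows "det (A * A\<^sup>T) \<noteq> 0"
proof -
  have "y = 0\<^sub>v 3" if y: "y \<in> carrier_vec 3" and "(A * A\<^sup>T) *\<^sub>v y = 0\<^sub>v 3" for y
  proof -
    let ?f = "\<lambda>l. y $ 0 * \<alpha> l + y $ 1 * \<beta> l + y $ 2"
    have "A *\<^sub>v (A\<^sup>T *\<^sub>v y) = 0\<^sub>v 3"
      using that A_carrier by (simp add: assoc_mult_mat_vec)
    then have products: "vec 3 (\<lambda>i. dot n ([\<alpha>, \<beta>, \<lambda>_. 1] ! i) ?f) = 0\<^sub>v 3"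
      unfolding A_transpose_mult_vec[OF y] by (simp add: A_mult_vec)
    have "dot n ([\<alpha>, \<beta>, \<lambda>_. 1] ! i) ?f = 0" if "i < 3" for i
    proof -
      have "vec 3 (\<lambda>i. dot n ([\<alpha>, \<beta>, \<lambda>_. 1] ! i) ?f) $ i = 0\<^sub>v 3 $ i"
        by (simp only: products)
      then show ?thesis using that by simp
    qed
    from this[of 0] this[of 1] this[of 2]
    have "dot n \<alpha> ?f = 0" "dot n \<beta> ?f = 0" "dot n (\<lambda>_. 1) ?f = 0"
      by simp_all
    then have "y $ 0 = 0 \<and> y $ 1 = 0 \<and> y $ 2 = 0"
      using affine_orthogonal_imp_zero[OF assms] by blast
    then show ?thesis
      using y by (intro eq_vecI) (auto simp: eval_nat_numeral less_Suc_eq)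
  qed
  then show ?thesis
    using det_0_iff_vec_prod_zero_field[of "A * A\<^sup>T" 3] A_carrier by auto
qed

lemma gram_inverseE:
  assumes "u1\<^sup>2 + u2\<^sup>2 < 1"
  obtains B where "mat_inverse (A * A\<^sup>T) = Some B" and "(A * A\<^sup>T) * B = 1\<^sub>m 3"
    and "B * (A * A\<^sup>T) = 1\<^sub>m 3" and "B \<in> carrier_mat 3 3"
proof -
  have "A * A\<^sup>T \<in> carrier_mat 3 3" using A_carrier by simp
  then show ?thesis using mat_inverse_SomeE det_gram_nonzero[OF assms] that by blast
qed

lemma rank_A:
  assumes "u1\<^sup>2 + u2\<^sup>2 < 1"
  shows "vec_space.rank 3 A = 3"
proof -
  obtain B where "(A * A\<^sup>T) * B = 1\<^sub>m 3" "B \<in> carrier_mat 3 3"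
    using gram_inverseE[OF assms] by blast
  moreover have "A * (A\<^sup>T * B) = (A * A\<^sup>T) * B"
    using A_carrier \<open>B \<in> _\<close> by (intro assoc_mult_mat[symmetric]) auto
  ultimately have "A * (A\<^sup>T * B) = 1\<^sub>m 3" by simp
  moreover have "A\<^sup>T * B \<in> carrier_mat n 3" using A_carrier \<open>B \<in> _\<close> by simp
  ultimately show ?thesis using rank_eq_if_right_inverse[OF A_carrier] by blast
qed

lemma min_norm_solution:
  assumes "u1\<^sup>2 + u2\<^sup>2 < 1"
  shows "A\<^sup>T *\<^sub>v (the (mat_inverse (A * A\<^sup>T)) *\<^sub>v (u3 \<cdot>\<^sub>v vec_of_list [\<sigma> * u1, \<sigma> * u2, c])) = vec n t"
proof -
  obtain B where B: "mat_inverse (A * A\<^sup>T) = Some B" "B * (A * A\<^sup>T) = 1\<^sub>m 3" "B \<in> carrier_mat 3 3"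
    using gram_inverseE[OF assms] by blast
  define y where "y = vec_of_list [- u1 / u3, - u2 / u3, c / (real n * u3)]"
  have y: "y \<in> carrier_vec 3" unfolding y_def carrier_vec_def by (simp del: vec_of_list_Cons)
  have "u3 \<noteq> 0" using u3_pos[OF assms] by simp
  have "A\<^sup>T *\<^sub>v y = vec n t"
    unfolding A_transpose_mult_vec[OF y] using \<open>u3 \<noteq> 0\<close> n_nonzero
    by (intro eq_vecI) (simp_all add: y_def t_def \<tau>_def vec_of_list_index field_simps del: vec_of_list_Cons)
  moreover have "A *\<^sub>v vec n t = u3 \<cdot>\<^sub>v vec_of_list [\<sigma> * u1, \<sigma> * u2, c]"
    unfolding A_mult_vec
  proof (rule eq_vecI)
    fix i assume "i < dim_vec (u3 \<cdot>\<^sub>v vec_of_list [\<sigma> * u1, \<sigma> * u2, c])"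
    then have "i < 3" by (simp del: vec_of_list_Cons)
    then have "i = 0 \<or> i = 1 \<or> i = 2" by auto
    then show "vec 3 (\<lambda>i. dot n ([\<alpha>, \<beta>, \<lambda>_. 1] ! i) t) $ i = (u3 \<cdot>\<^sub>v vec_of_list [\<sigma> * u1, \<sigma> * u2, c]) $ i"
      using gram_t[OF assms]
      by (auto simp: dot_commute[of n \<alpha> t] dot_commute[of n \<beta> t] dot_commute[of n "\<lambda>_. 1" t]
          vec_of_list_index simp del: vec_of_list_Cons)
  qed (simp del: vec_of_list_Cons)
  ultimately have "(A * A\<^sup>T) *\<^sub>v y = u3 \<cdot>\<^sub>v vec_of_list [\<sigma> * u1, \<sigma> * u2, c]"
    using A_carrier y by (simp add: assoc_mult_mat_vec)
  then have "B *\<^sub>v (u3 \<cdot>\<^sub>v vec_of_list [\<sigma> * u1, \<sigma> * u2, c]) = B *\<^sub>v ((A * A\<^sup>T) *\<^sub>v y)"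
    by (simp only:)
  also have "\<dots> = (B * (A * A\<^sup>T)) *\<^sub>v y"
    using A_carrier B(3) y by (intro assoc_mult_mat_vec[symmetric]) auto
  also have "\<dots> = y" using B(2) y by simp
  finally show ?thesis using B(1) \<open>A\<^sup>T *\<^sub>v y = vec n t\<close> by simp
qed

end


theorem theorem6p1:
  fixes n :: nat and \<gamma> :: real and z :: "nat \<Rightarrow> complex"
    and \<rho> \<sigma> u1 u2 u3 :: real and A :: "real mat" and b t :: "real vec"
  assumes n3: "n \<ge> 3"
    and g1: "\<gamma> < 1"
    and nz: "\<exists>l<n. z l \<noteq> 0"
    and rel: "complex_of_real (\<gamma> / real n) * (\<Sum>l<n. z l)\<^sup>2 = (\<Sum>l<n. (z l)\<^sup>2)"
    and rho_def: "\<rho> = (1/2) * (\<Sum>l<n. (cmod (z l))\<^sup>2) - \<gamma> / (2 * real n) * (cmod (\<Sum>l<n. z l))\<^sup>2"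
    and sigma_def: "\<sigma> = \<gamma> * \<rho> / (1 - \<gamma>)"
    and u1_def: "u1 = (\<Sum>l<n. Re (z l)) / sqrt (real n * (\<sigma> + \<rho>))"
    and u2_def: "u2 = (\<Sum>l<n. Im (z l)) / sqrt (real n * (\<sigma> + \<rho>))"
    and u3_def: "u3 = sqrt (1 - u1\<^sup>2 - u2\<^sup>2)"
    and A_def: "A = mat_of_rows n [vec n (\<lambda>l. Re (z l)), vec n (\<lambda>l. Im (z l)), vec n (\<lambda>l. 1)]"
    and b_def: "b = u3 \<cdot>\<^sub>v vec_of_list [\<sigma> * u1, \<sigma> * u2, sqrt (real n * (\<sigma> + \<rho>))]"
    and t_def: "t = A\<^sup>T *\<^sub>v (the (mat_inverse (A * A\<^sup>T)) *\<^sub>v b)"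
  shows "(\<forall>N. 3 \<le> N \<and> N \<le> n \<longrightarrow> (\<exists>W. is_full_lift n z \<gamma> N W)) \<and>
         (real n * (\<Sum>l<n. (cmod (z l))\<^sup>2) + (\<gamma> - 2) * (cmod (\<Sum>l<n. z l))\<^sup>2 \<noteq> 0 \<longrightarrow>
            u3 > 0 \<and> vec_space.rank 3 A = 3 \<and>
            (\<forall>W. is_lift n z \<gamma> 3 W \<longleftrightarrow>
               (\<exists>s::real. (s = 1 \<or> s = -1) \<and>
                  W = mat_of_rows n [vec n (\<lambda>l. Re (z l)), vec n (\<lambda>l. Im (z l)), s \<cdot>\<^sub>v t])))"
proof -
  interpret P: lift_problem n \<gamma> z \<rho> \<sigma>
    using n3 g1 nz rel rho_def sigma_def by unfold_locales
  have u: "u1 = P.u1" "u2 = P.u2" "u3 = P.u3"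
    unfolding u1_def u2_def u3_def P.u1_def P.u2_def P.u3_def P.c_def by simp_all
  show ?thesis
  proof (intro conjI impI allI)
    fix N assume "3 \<le> N \<and> N \<le> n"
    then show "\<exists>W. is_full_lift n z \<gamma> N W" using P.exists_full_lift by blast
  next
    assume "real n * (\<Sum>l<n. (cmod (z l))\<^sup>2) + (\<gamma> - 2) * (cmod (\<Sum>l<n. z l))\<^sup>2 \<noteq> 0"
    then have nondegenerate: "P.u1\<^sup>2 + P.u2\<^sup>2 < 1"
      using P.degeneracy_eq P.u_square_le_1 by force
    have "t = vec n P.t"
      using P.min_norm_solution[OF nondegenerate] unfolding t_def A_def b_def u P.c_def .
    then show "u3 > 0" "vec_space.rank 3 A = 3"
      "is_lift n z \<gamma> 3 W \<longleftrightarrow> (\<exists>s::real. (s = 1 \<or> s = -1) \<and>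
         W = mat_of_rows n [vec n (\<lambda>l. Re (z l)), vec n (\<lambda>l. Im (z l)), s \<cdot>\<^sub>v t])" for W
      unfolding u A_def
      using P.u3_pos P.rank_A P.lift3_imp_signed_t P.signed_t_is_lift3 nondegenerate by blast+
  qed
qed

end
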